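(* A matrix $E\in \mathbb{C}^{m\times m}$ is idempotent ($E^2=E$) if and only if there exist positive integers $p,q$ and matrices $U\in \mathbb{C}^{m\times p}$, $V\in \mathbb{C}^{q\times m}$ such that $E=U(VU)^{\dagger}V$.
   Context: $A^{\dagger}$ denotes the Moore–Penrose inverse of a matrix $A$, i.e. the unique matrix $X$ with $AXA=A$, $XAX=X$, $(AX)^*=AX$, $(XA)^*=XA$, where $^*$ denotes conjugate transpose. *)

theory Defs
  imports "Jordan_Normal_Form.Matrix"
begin

definition ctrans :: "complex mat \<Rightarrow> complex mat" where
  "ctrans A = mat (dim_col A) (dim_row A) (\<lambda>(i,j). cnj (A $$ (j,i)))"

definition is_MP_inverse :: "complex mat \<Rightarrow> complex mat \<Rightarrow> bool" where
  "is_MP_inverse A X \<longleftrightarrow>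
     X \<in> carrier_mat (dim_col A) (dim_row A) \<and>
     A * X * A = A \<and> X * A * X = X \<and>
     ctrans (A * X) = A * X \<and> ctrans (X * A) = X * A"

definition MP_inverse :: "complex mat \<Rightarrow> complex mat" where
  "MP_inverse A = (THE X. is_MP_inverse A X)"

end

theory Submission
  imports Defs "Jordan_Normal_Form.Gauss_Jordan_Elimination"
begin

text \<open>
  If \<open>E\<^sup>2 = E\<close>, then \<open>E = E E\<^sup>\<dagger> E = E (E E)\<^sup>\<dagger> E\<close>, so \<open>U = V = E\<close> work.
  Conversely, the Penrose equation \<open>X (V U) X = X\<close> for \<open>X = (V U)\<^sup>\<dagger>\<close> makes
  \<open>U X V\<close> idempotent. The substance lies in the existence of the Moore-Penrose inverse,
  which makes \<open>MP_inverse\<close> meaningful: a generalized inverse exists by Gauss-Jordan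
  elimination; one of \<open>A\<^sup>* A\<close> yields a \<open>{1,2,3}\<close>-inverse \<open>Y\<close> of \<open>A\<close>, conjugating
  one of \<open>A\<^sup>*\<close> yields a \<open>{1,2,4}\<close>-inverse \<open>Z\<close>, and \<open>Z A Y\<close> satisfies all four
  Penrose equations.
\<close>

lemma mat_mult_assoc: "dim_col A = dim_row B \<Longrightarrow> dim_col B = dim_row C \<Longrightarrow> A * B * C = A * (B * C)"
  by (rule assoc_mult_mat[of A "dim_row A" "dim_col A" B "dim_col B" C "dim_col C"]) auto

lemma ctrans_dim [simp]:
  "dim_row (ctrans A) = dim_col A" "dim_col (ctrans A) = dim_row A"
  unfolding ctrans_def by auto

lemma ctrans_carrier_mat [intro]: "A \<in> carrier_mat n k \<Longrightarrow> ctrans A \<in> carrier_mat k n"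
  by auto

lemma index_ctrans [simp]:
  "i < dim_col A \<Longrightarrow> j < dim_row A \<Longrightarrow> ctrans A $$ (i,j) = cnj (A $$ (j,i))"
  unfolding ctrans_def by auto

lemma ctrans_ctrans [simp]: "ctrans (ctrans A) = A"
  by (rule eq_matI) auto

lemma ctrans_mult:
  assumes "dim_col A = dim_row B"
  shows "ctrans (A * B) = ctrans B * ctrans A"
proof (rule eq_matI)
  fix i j assume i: "i < dim_row (ctrans B * ctrans A)" and j: "j < dim_col (ctrans B * ctrans A)"
  have "ctrans (A * B) $$ (i,j) = cnj (\<Sum>k<dim_row B. A $$ (j,k) * B $$ (k,i))"
    using i j assms by (simp add: scalar_prod_def lessThan_atLeast0)
  also have "\<dots> = (\<Sum>k<dim_row B. cnj (B $$ (k,i)) * cnj (A $$ (j,k)))"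
    by (simp add: cnj_sum mult.commute)
  also have "\<dots> = (ctrans B * ctrans A) $$ (i,j)"
    using i j assms by (simp add: scalar_prod_def lessThan_atLeast0)
  finally show "ctrans (A * B) $$ (i, j) = (ctrans B * ctrans A) $$ (i, j)" .
qed (use assms in auto)

text \<open>The diagonal entries of \<open>A\<^sup>* A\<close> are the squared column norms of \<open>A\<close>.\<close>

lemma ctrans_mult_self_eq_zero:
  assumes A: "A \<in> carrier_mat n k" and zero: "ctrans A * A = 0\<^sub>m k k"
  shows "A = 0\<^sub>m n k"
proof (rule eq_matI)
  fix i j assume i: "i < dim_row (0\<^sub>m n k)" and j: "j < dim_col (0\<^sub>m n k)"
  have "complex_of_real (\<Sum>l<n. (cmod (A $$ (l,j)))\<^sup>2) = (\<Sum>l<n. cnj (A $$ (l,j)) * A $$ (l,j))"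
    by (simp add: mult.commute flip: complex_norm_square)
  also have "\<dots> = (ctrans A * A) $$ (j,j)"
    using A j by (simp add: scalar_prod_def lessThan_atLeast0)
  also have "\<dots> = 0" using zero j by simp
  finally have "(\<Sum>l<n. (cmod (A $$ (l,j)))\<^sup>2) = 0"
    by (simp only: of_real_eq_0_iff)
  hence "\<forall>l\<in>{..<n}. (cmod (A $$ (l,j)))\<^sup>2 = 0"
    by (subst sum_nonneg_eq_0_iff[symmetric]) auto
  thus "A $$ (i,j) = 0\<^sub>m n k $$ (i,j)" using i j by auto
qed (use A in auto)

lemma ctrans_mult_self_cancel_left:
  assumes A: "A \<in> carrier_mat n k" and Z1: "Z1 \<in> carrier_mat k l" and Z2: "Z2 \<in> carrier_mat k l"
    and eq: "ctrans A * A * Z1 = ctrans A * A * Z2"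
  shows "A * Z1 = A * Z2"
proof -
  define D where "D = Z1 - Z2"
  have D: "D \<in> carrier_mat k l" using Z1 Z2 unfolding D_def by auto
  have "ctrans A * A * D = ctrans A * A * Z1 - ctrans A * A * Z2"
    unfolding D_def using A Z1 Z2 by (intro mult_minus_distrib_mat) auto
  also have "\<dots> = 0\<^sub>m k l" unfolding eq using A Z2 by (intro minus_r_inv_mat) auto
  finally have AAD: "ctrans A * A * D = 0\<^sub>m k l" .
  have "ctrans (A * D) * (A * D) = ctrans D * (ctrans A * A * D)"
    using A D by (simp add: ctrans_mult mat_mult_assoc)
  also have "\<dots> = 0\<^sub>m l l" using D unfolding AAD by simp
  finally have "ctrans (A * D) * (A * D) = 0\<^sub>m l l" .
  moreover have "A * D \<in> carrier_mat n l" using A D by simp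
  ultimately have "A * D = 0\<^sub>m n l" by (rule ctrans_mult_self_eq_zero[rotated])
  moreover have "A * D = A * Z1 - A * Z2"
    unfolding D_def using A Z1 Z2 by (intro mult_minus_distrib_mat) auto
  ultimately have diff: "A * Z1 - A * Z2 = 0\<^sub>m n l" by metis
  show ?thesis
  proof (rule eq_matI)
    fix i j assume ij: "i < dim_row (A * Z2)" "j < dim_col (A * Z2)"
    have "(A * Z1 - A * Z2) $$ (i,j) = 0" using diff ij A Z2 by simp
    thus "(A * Z1) $$ (i,j) = (A * Z2) $$ (i,j)" using ij A Z1 Z2 by simp
  qed (use A Z1 Z2 in auto)
qed

lemma row_echelon_form_g_inverse:
  fixes C :: "'a :: field mat"
  assumes C: "C \<in> carrier_mat nr nc" and "row_echelon_form C"
  shows "\<exists>S \<in> carrier_mat nc nr. C * S * C = C"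
proof -
  obtain f where "pivot_fun C f nc" using assms unfolding row_echelon_form_def by auto
  note pivot = pivot_funD[OF _ this, of nr]
  define S where "S = mat nc nr (\<lambda>(j,i). if f i < nc \<and> j = f i then 1 else (0::'a))"
  have S: "S \<in> carrier_mat nc nr" unfolding S_def by auto
  have CS: "C * S = mat nr nr (\<lambda>(i,l). if f l < nc \<and> i = l then 1 else 0)"
  proof (rule eq_matI)
    fix i l assume i: "i < dim_row (mat nr nr (\<lambda>(i,l). if f l < nc \<and> i = l then 1 else (0::'a)))"
      and l: "l < dim_col (mat nr nr (\<lambda>(i,l). if f l < nc \<and> i = l then 1 else (0::'a)))"
    have "(C * S) $$ (i,l) = (\<Sum>j\<in>{0..<nc}. if j = f l \<and> f l < nc then C $$ (i,j) else 0)"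
      using i l C S by (auto simp: scalar_prod_def S_def intro: sum.cong)
    also have "\<dots> = (if f l < nc then C $$ (i, f l) else 0)"
      by (cases "f l < nc") (auto simp: sum.delta)
    also have "\<dots> = (if f l < nc \<and> i = l then 1 else 0)"
      using pivot(4)[of l] pivot(5)[of l i] C i l by auto
    finally show "(C * S) $$ (i,l) = mat nr nr (\<lambda>(i,l). if f l < nc \<and> i = l then 1 else 0) $$ (i,l)"
      using i l by simp
  qed (use C S in auto)
  have "C * S * C = C"
  proof (rule eq_matI)
    fix i k assume i: "i < dim_row C" and k: "k < dim_col C"
    have "(C * S * C) $$ (i,k) = (\<Sum>l\<in>{0..<nr}. if l = i \<and> f i < nc then C $$ (l,k) else 0)"
      using i k C unfolding CS by (auto simp: scalar_prod_def intro: sum.cong)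
    also have "\<dots> = (if f i < nc then C $$ (i,k) else 0)"
      using i C by (cases "f i < nc") (auto simp: sum.delta)
    also have "\<dots> = C $$ (i,k)"
      using pivot(1)[of i] pivot(2)[of i k] i k C by fastforce
    finally show "(C * S * C) $$ (i,k) = C $$ (i,k)" .
  qed (use C S in auto)
  with S show ?thesis by blast
qed

lemma g_inverse_exists:
  fixes A :: "'a :: field mat"
  assumes A: "A \<in> carrier_mat nr nc"
  shows "\<exists>G \<in> carrier_mat nc nr. A * G * A = A"
proof -
  define C where "C = gauss_jordan_single A"
  note gauss_jordan = gauss_jordan_single[OF A C_def[symmetric]]
  obtain P Q where PQ: "C = P * A" "P \<in> carrier_mat nr nr" "Q \<in> carrier_mat nr nr"
    "P * Q = 1\<^sub>m nr" "Q * P = 1\<^sub>m nr"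
    using gauss_jordan(4) by blast
  obtain S where S: "S \<in> carrier_mat nc nr" and CSC: "C * S * C = C"
    using row_echelon_form_g_inverse[OF gauss_jordan(2,3)] by blast
  have C: "C \<in> carrier_mat nr nc" by (fact gauss_jordan(2))
  have A_eq: "A = Q * C"
    using PQ A by (simp add: mat_mult_assoc[symmetric])
  have "A * (S * P) * A = Q * (C * S * (P * Q) * C)"
    using PQ C S unfolding A_eq by (simp add: mat_mult_assoc)
  also have "\<dots> = A"
    using PQ C S CSC A_eq by simp
  finally show ?thesis using S PQ by (intro bexI[of _ "S * P"]) auto
qed

lemma ctrans_mult_self_g_inverse:
  assumes A: "A \<in> carrier_mat n k" and G: "G \<in> carrier_mat k k"
    and g_inv: "ctrans A * A * G * (ctrans A * A) = ctrans A * A"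
  shows "A * G * ctrans A * A = A"
proof -
  have "ctrans A * A * (G * ctrans A * A) = ctrans A * A * 1\<^sub>m k"
    using g_inv A G by (simp add: mat_mult_assoc)
  then have "A * (G * ctrans A * A) = A * 1\<^sub>m k"
    by (rule ctrans_mult_self_cancel_left[OF A _ one_carrier_mat, rotated]) (use A G in auto)
  thus ?thesis using A G by (simp add: mat_mult_assoc)
qed

lemma inverse_123_exists:
  assumes A: "A \<in> carrier_mat n k"
  shows "\<exists>Y \<in> carrier_mat k n. A * Y * A = A \<and> Y * A * Y = Y \<and> ctrans (A * Y) = A * Y"
proof -
  have "ctrans A * A \<in> carrier_mat k k" using A by auto
  then obtain G where G: "G \<in> carrier_mat k k"
    and g_inv: "ctrans A * A * G * (ctrans A * A) = ctrans A * A"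
    using g_inverse_exists by blast
  have "ctrans A * A * ctrans G * (ctrans A * A) = ctrans (ctrans A * A * G * (ctrans A * A))"
    using A G by (simp add: ctrans_mult mat_mult_assoc)
  also have "\<dots> = ctrans A * A"
    unfolding g_inv using A by (simp add: ctrans_mult)
  finally have g_inv': "ctrans A * A * ctrans G * (ctrans A * A) = ctrans A * A" .
  have AGA: "A * G * ctrans A * A = A"
    by (rule ctrans_mult_self_g_inverse[OF A G g_inv])
  have "ctrans A * A * G * ctrans A = ctrans (A * ctrans G * ctrans A * A)"
    using A G by (simp add: ctrans_mult mat_mult_assoc)
  also have "A * ctrans G * ctrans A * A = A"
    using ctrans_mult_self_g_inverse[OF A _ g_inv'] G by auto
  finally have AGA': "ctrans A * A * G * ctrans A = ctrans A" .
  define Y where "Y = G * ctrans A"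
  have Y: "Y \<in> carrier_mat k n" using A G unfolding Y_def by auto
  have 1: "A * Y * A = A" using AGA A G unfolding Y_def by (simp add: mat_mult_assoc)
  have 2: "Y * A * Y = Y"
    using AGA' A G unfolding Y_def by (simp add: mat_mult_assoc)
  text \<open>\<open>(A Y)\<^sup>* = (A Y)\<^sup>* (A Y)\<close>, and the right-hand side is Hermitian.\<close>
  have "ctrans (A * Y) * (A * Y) = A * ctrans G * (ctrans A * A * G * ctrans A)"
    using A G unfolding Y_def by (simp add: ctrans_mult mat_mult_assoc)
  also have "\<dots> = ctrans (A * Y)"
    using AGA' A G unfolding Y_def by (simp add: ctrans_mult mat_mult_assoc)
  finally have AY: "ctrans (A * Y) * (A * Y) = ctrans (A * Y)" .
  have "ctrans (A * Y) = ctrans (A * Y) * (A * Y)" by (rule AY[symmetric])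
  also have "\<dots> = ctrans (ctrans (A * Y) * (A * Y))" using A Y by (simp add: ctrans_mult)
  also have "\<dots> = A * Y" unfolding AY by simp
  finally have 3: "ctrans (A * Y) = A * Y" .
  show ?thesis using Y 1 2 3 by blast
qed

lemma inverse_124_exists:
  assumes A: "A \<in> carrier_mat n k"
  shows "\<exists>Z \<in> carrier_mat k n. A * Z * A = A \<and> Z * A * Z = Z \<and> ctrans (Z * A) = Z * A"
proof -
  obtain W where W: "W \<in> carrier_mat n k" and 1: "ctrans A * W * ctrans A = ctrans A"
    and 2: "W * ctrans A * W = W" and 3: "ctrans (ctrans A * W) = ctrans A * W"
    using inverse_123_exists[of "ctrans A" k n] A by blast
  have "ctrans (ctrans A * W * ctrans A) = A * ctrans W * A"
    "ctrans (W * ctrans A * W) = ctrans W * A * ctrans W"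
    "ctrans (ctrans A * W) = ctrans W * A"
    using A W by (simp_all add: ctrans_mult mat_mult_assoc)
  with 1 2 3 W show ?thesis by (intro bexI[of _ "ctrans W"]) auto
qed

lemma MP_inverse_exists:
  assumes A: "A \<in> carrier_mat n k"
  shows "\<exists>X. is_MP_inverse A X"
proof -
  obtain Y where Y: "Y \<in> carrier_mat k n" and Y1: "A * Y * A = A" and Y3: "ctrans (A * Y) = A * Y"
    using inverse_123_exists[OF A] by blast
  obtain Z where Z: "Z \<in> carrier_mat k n" and Z1: "A * Z * A = A" and Z2: "Z * A * Z = Z"
    and Z4: "ctrans (Z * A) = Z * A"
    using inverse_124_exists[OF A] by blast
  define X where "X = Z * A * Y"
  have X: "X \<in> carrier_mat k n" using A Y Z unfolding X_def by auto
  have "A * X = A * Z * A * Y" using A Y Z unfolding X_def by (simp add: mat_mult_assoc)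
  hence AX: "A * X = A * Y" using Z1 by simp
  have "X * A = Z * (A * Y * A)" using A Y Z unfolding X_def by (simp add: mat_mult_assoc)
  hence XA: "X * A = Z * A" using Y1 by simp
  have "X * A * X = Z * A * Z * A * Y" using A Y Z unfolding XA unfolding X_def by (simp add: mat_mult_assoc)
  hence "X * A * X = X" using Z2 unfolding X_def by simp
  moreover have "A * X * A = A" using AX Y1 by simp
  ultimately show ?thesis
    unfolding is_MP_inverse_def using A X AX XA Y3 Z4 by auto
qed

lemma is_MP_inverse_unique:
  assumes "is_MP_inverse A X" "is_MP_inverse A Y"
  shows "X = Y"
proof -
  from assms have X: "X \<in> carrier_mat (dim_col A) (dim_row A)" and X1: "A * X * A = A"
    and X2: "X * A * X = X" and X3: "ctrans (A * X) = A * X" and X4: "ctrans (X * A) = X * A"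
    and Y: "Y \<in> carrier_mat (dim_col A) (dim_row A)" and Y1: "A * Y * A = A"
    and Y2: "Y * A * Y = Y" and Y3: "ctrans (A * Y) = A * Y" and Y4: "ctrans (Y * A) = Y * A"
    unfolding is_MP_inverse_def by auto
  have "A * X = ctrans (A * Y * A * X)" using X3 Y1 by simp
  also have "\<dots> = ctrans (A * X) * ctrans (A * Y)"
    using X Y by (simp add: ctrans_mult mat_mult_assoc)
  also have "\<dots> = A * X * A * Y" using X Y X3 Y3 by (simp add: mat_mult_assoc)
  also have "\<dots> = A * Y" using X1 by simp
  finally have AX: "A * X = A * Y" .
  have "X * A = ctrans (X * A * Y * A)" using X4 Y1 X Y by (simp add: mat_mult_assoc)
  also have "\<dots> = ctrans (Y * A) * ctrans (X * A)"
    using X Y by (simp add: ctrans_mult mat_mult_assoc)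
  also have "\<dots> = Y * A * X * A" using X Y X4 Y4 by (simp add: mat_mult_assoc)
  also have "\<dots> = Y * A" using X1 X Y by (simp add: mat_mult_assoc)
  finally have XA: "X * A = Y * A" .
  have "X = Y * A * X" using X2 XA by simp
  also have "\<dots> = Y * A * Y" using AX X Y by (simp add: mat_mult_assoc)
  finally show ?thesis using Y2 by simp
qed

lemma is_MP_inverse_MP_inverse:
  assumes "A \<in> carrier_mat n k"
  shows "is_MP_inverse A (MP_inverse A)"
  unfolding MP_inverse_def using MP_inverse_exists[OF assms] is_MP_inverse_unique by (metis theI)

lemma idempotent_eq_mult_MP_inverse_square_mult:
  assumes E: "E \<in> carrier_mat m m" and idem: "E * E = E"
  shows "E = E * MP_inverse (E * E) * E"
  using is_MP_inverse_MP_inverse[OF E] unfolding is_MP_inverse_def idem by simp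

lemma mult_MP_inverse_mult_idempotent:
  assumes U: "U \<in> carrier_mat m p" and V: "V \<in> carrier_mat q m"
  defines "E \<equiv> U * MP_inverse (V * U) * V"
  shows "E * E = E"
proof -
  have "is_MP_inverse (V * U) (MP_inverse (V * U))"
    using U V by (intro is_MP_inverse_MP_inverse) auto
  then have X: "MP_inverse (V * U) \<in> carrier_mat p q"
    and X2: "MP_inverse (V * U) * (V * U) * MP_inverse (V * U) = MP_inverse (V * U)"
    unfolding is_MP_inverse_def using U V by auto
  have "E * E = U * (MP_inverse (V * U) * (V * U) * MP_inverse (V * U)) * V"
    using U V X unfolding E_def by (simp add: mat_mult_assoc)
  with X2 show ?thesis unfolding E_def by simp
qed

theorem proposition2:
  fixes E :: "complex mat" and m :: nat
  assumes "E \<in> carrier_mat m m"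
  shows "E * E = E \<longleftrightarrow>
    (\<exists>p q :: nat. \<exists>U V :: complex mat. p > 0 \<and> q > 0 \<and>
       U \<in> carrier_mat m p \<and> V \<in> carrier_mat q m \<and>
       E = U * MP_inverse (V * U) * V)"
proof
  assume idem: "E * E = E"
  show "\<exists>p q U V. p > 0 \<and> q > 0 \<and> U \<in> carrier_mat m p \<and> V \<in> carrier_mat q m \<and>
      E = U * MP_inverse (V * U) * V"
  proof (cases "m = 0")
    case True
    text \<open>\<open>U = V = E\<close> would violate \<open>p, q > 0\<close>; empty factors of size \<open>0 \<times> 1\<close> and \<open>1 \<times> 0\<close> do.\<close>
    have "E = 0\<^sub>m 0 1 * MP_inverse (0\<^sub>m 1 0 * 0\<^sub>m 0 1) * 0\<^sub>m 1 0"
      using assms True by (intro eq_matI) auto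
    with True show ?thesis by (intro exI[of _ 1] exI[of _ "0\<^sub>m 0 1"] exI[of _ "0\<^sub>m 1 0"]) auto
  next
    case False
    then have "m > 0" by simp
    then show ?thesis
      using assms idempotent_eq_mult_MP_inverse_square_mult[OF assms idem] by blast
  qed
next
  assume "\<exists>p q U V. p > 0 \<and> q > 0 \<and> U \<in> carrier_mat m p \<and> V \<in> carrier_mat q m \<and>
      E = U * MP_inverse (V * U) * V"
  then show "E * E = E" using mult_MP_inverse_mult_idempotent by blast
qed

end
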